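(* Let $\Phi_1,\Phi_2$ be simple point processes on $\mathbb{R}^d$ with $\sigma$-finite $k$-th moment measures for all $k\ge1$, and let $\alpha_j^{(k)}$ denote the $k$-th factorial moment measure of $\Phi_j$. If $\alpha_1^{(k)}(\cdot)\le\alpha_2^{(k)}(\cdot)$ for all $k\ge1$, then $\underline r_c(\Phi_1)\ge\underline r_c(\Phi_2)$. Moreover, for a stationary, $\alpha$-weakly sub-Poisson point process $\Phi$ of unit intensity, $\theta_d\,\underline r_c(\Phi)^d\ge1$, where $\theta_d$ is the volume of the unit ball in $\mathbb{R}^d$.
   Context: Let $W_m=[-m,m]^d$. For a point process $\Phi$ and $r>0$, let $N_{m,k}(\Phi,r)$ be the number of ordered $k$-tuples $(X_1,\dots,X_k)$ of distinct points of $\Phi\cap W_m$ with $|X_1|\le r$, $\inf_{x\in\partial W_m}|x-X_k|\le r$ and $|X_{i+1}-X_i|\le r$ for $1\le i\le k-1$ (self-avoiding paths of length $k$ from the origin to $\partial W_m$ in the Boolean model $\bigcup_{X\in\Phi}B_X(r)$), and $N_m(\Phi,r)=\sum_{k\ge1}N_{m,k}(\Phi,r)$. The lower critical radius is $\underline r_c(\Phi)=\inf\{r:\liminf_m\mathbb{E}N_m(\Phi,r)>0\}$. With mean measure $\alpha$ and factorial moment measures $\alpha^{(k)}$, $\Phi$ is $\alpha$-weakly sub-Poisson if $\alpha^{(k)}(B_1\times\dots\times B_k)\le\prod_{i=1}^k\alpha(B_i)$ for all $k$ and mutually disjoint bounded Borel $B_i$. *)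

theory Defs
  imports "HOL-Probability.Probability"
begin

definition ecount :: "'a set \<Rightarrow> ennreal" where
  "ecount A = (if finite A then of_nat (card A) else \<infinity>)"

definition simple_point_process :: "'a measure \<Rightarrow> ('a \<Rightarrow> ('d::euclidean_space) set) \<Rightarrow> bool" where
  "simple_point_process M \<Phi> \<longleftrightarrow>
     prob_space M \<and>
     (\<forall>\<omega>\<in>space M. \<forall>B. bounded B \<longrightarrow> finite (\<Phi> \<omega> \<inter> B)) \<and>
     (\<forall>B\<in>sets borel. (\<lambda>\<omega>. ecount (\<Phi> \<omega> \<inter> B)) \<in> borel_measurable M)"

definition tuple_space :: "nat \<Rightarrow> (nat \<Rightarrow> 'd::euclidean_space) measure" where
  "tuple_space k = PiM {..<k} (\<lambda>_. borel)"

definition distinct_tuples :: "nat \<Rightarrow> 'd set \<Rightarrow> (nat \<Rightarrow> 'd) set" where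
  "distinct_tuples k S = {x \<in> PiE {..<k} (\<lambda>_. S). inj_on x {..<k}}"

definition mean_measure :: "'a measure \<Rightarrow> ('a \<Rightarrow> 'd set) \<Rightarrow> 'd set \<Rightarrow> ennreal" where
  "mean_measure M \<Phi> B = (\<integral>\<^sup>+ \<omega>. ecount (\<Phi> \<omega> \<inter> B) \<partial>M)"

definition moment_measure :: "'a measure \<Rightarrow> ('a \<Rightarrow> 'd set) \<Rightarrow> nat \<Rightarrow> (nat \<Rightarrow> 'd) set \<Rightarrow> ennreal" where
  "moment_measure M \<Phi> k C = (\<integral>\<^sup>+ \<omega>. ecount (PiE {..<k} (\<lambda>_. \<Phi> \<omega>) \<inter> C) \<partial>M)"

definition factorial_moment_measure :: "'a measure \<Rightarrow> ('a \<Rightarrow> 'd set) \<Rightarrow> nat \<Rightarrow> (nat \<Rightarrow> 'd) set \<Rightarrow> ennreal" where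
  "factorial_moment_measure M \<Phi> k C = (\<integral>\<^sup>+ \<omega>. ecount (distinct_tuples k (\<Phi> \<omega>) \<inter> C) \<partial>M)"

definition sigma_finite_moments :: "'a measure \<Rightarrow> ('a \<Rightarrow> ('d::euclidean_space) set) \<Rightarrow> bool" where
  "sigma_finite_moments M \<Phi> \<longleftrightarrow>
     (\<forall>k\<ge>1. \<exists>A::nat \<Rightarrow> (nat \<Rightarrow> 'd) set.
        range A \<subseteq> sets (tuple_space k) \<and> \<Union>(range A) = space (tuple_space k) \<and>
        (\<forall>i. moment_measure M \<Phi> k (A i) < \<infinity>))"

definition window :: "nat \<Rightarrow> 'd::euclidean_space set" where
  "window m = cbox (- (real m *\<^sub>R One)) (real m *\<^sub>R One)"

definition path_count :: "nat \<Rightarrow> nat \<Rightarrow> 'd::euclidean_space set \<Rightarrow> real \<Rightarrow> ennreal" where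
  "path_count m k S r = ecount {x \<in> distinct_tuples k (S \<inter> window m).
      norm (x 0) \<le> r \<and> infdist (x (k - 1)) (frontier (window m)) \<le> r \<and>
      (\<forall>i. Suc i < k \<longrightarrow> dist (x (Suc i)) (x i) \<le> r)}"

definition expected_paths :: "'a measure \<Rightarrow> ('a \<Rightarrow> 'd::euclidean_space set) \<Rightarrow> nat \<Rightarrow> real \<Rightarrow> ennreal" where
  "expected_paths M \<Phi> m r = (\<integral>\<^sup>+ \<omega>. (\<Sum>k. path_count m (Suc k) (\<Phi> \<omega>) r) \<partial>M)"

text \<open>Lower critical radius (infimum of the empty set is +infinity).\<close>
definition lower_crit_radius :: "'a measure \<Rightarrow> ('a \<Rightarrow> 'd::euclidean_space set) \<Rightarrow> ereal" where
  "lower_crit_radius M \<Phi> =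
     Inf {ereal r | r. r > 0 \<and> liminf (\<lambda>m. expected_paths M \<Phi> m r) > 0}"

definition config_space :: "'d::euclidean_space set measure" where
  "config_space = sigma UNIV {{A. ecount (A \<inter> B) = c} | B c. B \<in> sets borel}"

definition stationary :: "'a measure \<Rightarrow> ('a \<Rightarrow> 'd::euclidean_space set) \<Rightarrow> bool" where
  "stationary M \<Phi> \<longleftrightarrow>
     (\<forall>v. distr M config_space (\<lambda>\<omega>. (\<lambda>x. x + v) ` \<Phi> \<omega>) = distr M config_space \<Phi>)"

definition weakly_sub_poisson :: "'a measure \<Rightarrow> ('a \<Rightarrow> 'd::euclidean_space set) \<Rightarrow> bool" where
  "weakly_sub_poisson M \<Phi> \<longleftrightarrow>
     (\<forall>k B. (\<forall>i<k. B i \<in> sets borel \<and> bounded (B i)) \<and> disjoint_family_on B {..<k} \<longrightarrow>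
        factorial_moment_measure M \<Phi> k (PiE {..<k} B) \<le> (\<Prod>i<k. mean_measure M \<Phi> (B i)))"

end

theory Submission
  imports Defs
begin

text \<open>The expected number of r-paths from the origin to the boundary of the window W_m is
  \<Sum>_k \<alpha>^(k+1)(P_{m,k,r}), where P_{m,k,r} is the measurable set of such paths with k steps;
  hence it, and with it the lower critical radius, is monotone in the factorial moment measures.

  For a weakly sub-Poisson process of unit intensity, \<alpha>^(k) is dominated by Lebesgue measure on
  products of disjoint bounded sets. Covering the injective tuples by products of dyadic cells that
  are just fine enough to separate their points shows \<alpha>^(k)(C) \<le> Leb^k(E) for every set E containing
  an enlargement of C. Enlarging the r-paths yields \<rho>-chains for any \<rho> > r, whose volume is
  (\<theta>_d \<rho>^d)^(k+1); since an r-path to the boundary of W_m has at least m/r - 2 steps, the expected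
  number of paths tends to 0 whenever \<theta>_d r^d < 1.\<close>

section \<open>Counting tuples of points\<close>

lemma ecount_eq_emeasure: "ecount A = emeasure (count_space UNIV) A"
  by (simp add: ecount_def emeasure_count_space)

lemma ecount_mono: "A \<subseteq> B \<Longrightarrow> ecount A \<le> ecount B"
  unfolding ecount_eq_emeasure by (rule emeasure_mono) auto

lemma ecount_PiE:
  assumes "finite I" "\<And>i. i \<in> I \<Longrightarrow> finite (F i)"
  shows "ecount (PiE I F) = (\<Prod>i\<in>I. ecount (F i))"
  using assms by (simp add: ecount_def finite_PiE card_PiE)

lemma ecount_Diff: "finite B \<Longrightarrow> A \<subseteq> B \<Longrightarrow> ecount (B - A) = ecount B - ecount A"
  unfolding ecount_eq_emeasure
  by (intro emeasure_Diff) (auto simp: emeasure_count_space dest: finite_subset)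

lemma ecount_UN_disjoint: "disjoint_family A \<Longrightarrow> ecount (\<Union>i. A i) = (\<Sum>i. ecount (A i))"
  unfolding ecount_eq_emeasure by (rule suminf_emeasure[symmetric]) auto

lemma factorial_moment_measure_empty [simp]: "factorial_moment_measure M \<Phi> k {} = 0"
  by (simp add: factorial_moment_measure_def ecount_def)

lemma space_tuple_space: "space (tuple_space k) = PiE {..<k} (\<lambda>_. UNIV)"
  by (simp add: tuple_space_def space_PiM)

lemma sets_PiM_lborel: "sets (PiM {..<k} (\<lambda>_. lborel :: 'd::euclidean_space measure)) = sets (tuple_space k)"
  unfolding tuple_space_def by (rule sets_PiM_cong) auto

lemma measurable_tuple_component [measurable]:
  "i < k \<Longrightarrow> (\<lambda>x. x i) \<in> borel_measurable (tuple_space k :: (nat \<Rightarrow> 'd::euclidean_space) measure)"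
  unfolding tuple_space_def by (rule measurable_component_singleton) simp

lemma pred_eq_borel [measurable (raw)]:
  fixes f g :: "_ \<Rightarrow> 'b::{second_countable_topology, t2_space}"
  assumes "f \<in> borel_measurable M" "g \<in> borel_measurable M"
  shows "Measurable.pred M (\<lambda>x. f x = g x)"
  unfolding pred_def using assms by (rule measurable_equality_set)

lemma finite_inter_bounded:
  "simple_point_process M \<Phi> \<Longrightarrow> \<omega> \<in> space M \<Longrightarrow> bounded W \<Longrightarrow> B \<subseteq> W \<Longrightarrow> finite (\<Phi> \<omega> \<inter> B)"
  unfolding simple_point_process_def by (meson bounded_subset finite_subset inf_le2 le_inf_iff)

lemma measurable_ecount_box:
  fixes W :: "'d::euclidean_space set" and \<Phi> :: "'a \<Rightarrow> 'd set" and k :: nat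
  assumes spp: "simple_point_process M \<Phi>" and W: "bounded W" "W \<in> sets borel"
    and X: "\<And>i. i < k \<Longrightarrow> X i \<in> sets borel"
  shows "(\<lambda>\<omega>. ecount (PiE {..<k} (\<lambda>i. \<Phi> \<omega> \<inter> (X i \<inter> W)))) \<in> borel_measurable M"
proof -
  have "(\<lambda>\<omega>. \<Prod>i<k. ecount (\<Phi> \<omega> \<inter> (X i \<inter> W))) \<in> borel_measurable M"
    using spp X W unfolding simple_point_process_def by (intro borel_measurable_prod_ennreal) auto
  then show ?thesis
    by (rule measurable_cong[THEN iffD1, rotated])
      (auto intro!: ecount_PiE[symmetric] finite_inter_bounded[OF spp _ W(1)])
qed

text \<open>A Dynkin-system argument starting from boxes; confining the tuples to the bounded set W
  keeps all counts finite.\<close>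
lemma measurable_ecount_tuples:
  fixes W :: "'d::euclidean_space set" and \<Phi> :: "'a \<Rightarrow> 'd set"
  assumes spp: "simple_point_process M \<Phi>" and W: "bounded W" "W \<in> sets borel"
    and C: "C \<in> sets (tuple_space k)"
  shows "(\<lambda>\<omega>. ecount (PiE {..<k} (\<lambda>_. \<Phi> \<omega>) \<inter> C \<inter> PiE {..<k} (\<lambda>_. W))) \<in> borel_measurable M"
proof -
  let ?T = "\<lambda>\<omega> A. PiE {..<k} (\<lambda>_. \<Phi> \<omega>) \<inter> A \<inter> PiE {..<k} (\<lambda>_. W)"
  have "C \<in> sigma_sets (PiE {..<k} (\<lambda>_. space borel)) (prod_algebra {..<k} (\<lambda>_. borel :: 'd measure))"
    using C by (simp add: tuple_space_def sets_PiM)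
  then show ?thesis
  proof (induction C rule: sigma_sets_induct_disjoint[OF Int_stable_prod_algebra
        prod_algebra_sets_into_space, consumes 1, case_names basic empty compl union])
    case (basic A)
    then obtain X where A: "A = PiE {..<k} X" and X: "X \<in> (\<Pi> j\<in>{..<k}. sets borel)"
      by (auto simp: prod_algebra_eq_finite)
    have "?T \<omega> A = PiE {..<k} (\<lambda>i. \<Phi> \<omega> \<inter> (X i \<inter> W))" for \<omega>
      by (auto simp: A PiE_iff)
    then show ?case using measurable_ecount_box[OF spp W, where X = X] X by (simp add: Pi_iff)
  next
    case empty
    then show ?case by simp
  next
    case (compl A)
    have "?T \<omega> (PiE {..<k} (\<lambda>_. UNIV) - A) = PiE {..<k} (\<lambda>_. \<Phi> \<omega> \<inter> W) - ?T \<omega> A" for \<omega>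
      by (auto simp: PiE_iff)
    moreover have "?T \<omega> A \<subseteq> PiE {..<k} (\<lambda>_. \<Phi> \<omega> \<inter> W)" for \<omega>
      by (auto simp: PiE_iff)
    ultimately have diff: "ecount (?T \<omega> (PiE {..<k} (\<lambda>_. UNIV) - A))
        = ecount (PiE {..<k} (\<lambda>_. \<Phi> \<omega> \<inter> W)) - ecount (?T \<omega> A)" if "\<omega> \<in> space M" for \<omega>
      using finite_inter_bounded[OF spp that W(1)] by (simp add: ecount_Diff finite_PiE)
    have "(\<lambda>\<omega>. ecount (PiE {..<k} (\<lambda>_. \<Phi> \<omega> \<inter> W)) - ecount (?T \<omega> A)) \<in> borel_measurable M"
      using measurable_ecount_box[OF spp W, where X = "\<lambda>_. UNIV"] compl.IH by simp
    then show ?case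
      by (rule measurable_cong[THEN iffD1, rotated]) (simp add: diff)
  next
    case (union A)
    have UN: "?T \<omega> (\<Union>i. A i) = (\<Union>i. ?T \<omega> (A i))" for \<omega>
      by auto
    have "ecount (?T \<omega> (\<Union>i. A i)) = (\<Sum>i. ecount (?T \<omega> (A i)))" for \<omega>
      unfolding UN using union.hyps(1)
      by (intro ecount_UN_disjoint) (auto simp: disjoint_family_on_def)
    moreover have "(\<lambda>\<omega>. \<Sum>i. ecount (?T \<omega> (A i))) \<in> borel_measurable M"
      by (rule borel_measurable_suminf_order) (rule union.IH)
    ultimately show ?case by simp
  qed
qed

definition injective_tuples :: "nat \<Rightarrow> (nat \<Rightarrow> 'd::euclidean_space) set" where
  "injective_tuples k = {x \<in> space (tuple_space k). \<forall>i\<in>{..<k}. \<forall>j\<in>{..<k}. i \<noteq> j \<longrightarrow> x i \<noteq> x j}"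

lemma injective_tuples_sets: "injective_tuples k \<in> sets (tuple_space k)"
proof -
  have "Measurable.pred (tuple_space k) (\<lambda>x. x i = (x j :: 'd::euclidean_space))"
    if "i < k" "j < k" for i j
    using that by measurable
  then show ?thesis unfolding injective_tuples_def by measurable
qed

lemma distinct_tuples_eq: "distinct_tuples k S = PiE {..<k} (\<lambda>_. S) \<inter> injective_tuples k"
  unfolding distinct_tuples_def injective_tuples_def space_tuple_space inj_on_def
  by (auto simp: PiE_iff extensional_def)

lemma measurable_ecount_distinct_tuples:
  fixes W :: "'d::euclidean_space set" and \<Phi> :: "'a \<Rightarrow> 'd set"
  assumes spp: "simple_point_process M \<Phi>" and W: "bounded W" "W \<in> sets borel"
    and C: "C \<in> sets (tuple_space k)" "C \<subseteq> PiE {..<k} (\<lambda>_. W)"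
  shows "(\<lambda>\<omega>. ecount (distinct_tuples k (\<Phi> \<omega>) \<inter> C)) \<in> borel_measurable M"
proof -
  have "distinct_tuples k (\<Phi> \<omega>) \<inter> C
      = PiE {..<k} (\<lambda>_. \<Phi> \<omega>) \<inter> (C \<inter> injective_tuples k) \<inter> PiE {..<k} (\<lambda>_. W)" for \<omega>
    using C(2) by (auto simp: distinct_tuples_eq)
  moreover have "C \<inter> injective_tuples k \<in> sets (tuple_space k)"
    using C(1) injective_tuples_sets by auto
  ultimately show ?thesis using measurable_ecount_tuples[OF spp W] by simp
qed


section \<open>Paths and monotonicity of the critical radius\<close>

definition chain_tuples :: "real \<Rightarrow> nat \<Rightarrow> (nat \<Rightarrow> 'd::euclidean_space) set" where
  "chain_tuples \<rho> k = {x \<in> space (tuple_space (Suc k)).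
     norm (x 0) \<le> \<rho> \<and> (\<forall>i\<in>{..<k}. dist (x (Suc i)) (x i) \<le> \<rho>)}"

definition path_tuples :: "nat \<Rightarrow> nat \<Rightarrow> real \<Rightarrow> (nat \<Rightarrow> 'd::euclidean_space) set" where
  "path_tuples m k r = {x \<in> chain_tuples r k.
     (\<forall>i\<in>{..<Suc k}. x i \<in> window m) \<and> infdist (x k) (frontier (window m)) \<le> r}"

lemma chain_tuples_sets: "chain_tuples \<rho> k \<in> sets (tuple_space (Suc k))"
proof -
  have "Measurable.pred (tuple_space (Suc k)) (\<lambda>x. dist (x (Suc i)) (x i :: 'd::euclidean_space) \<le> \<rho>)"
    if "i < k" for i
  proof -
    have "i < Suc k" "Suc i < Suc k" using that by simp_all
    then show ?thesis by measurable
  qed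
  then show ?thesis unfolding chain_tuples_def by measurable
qed

lemma window_sets [measurable]: "window m \<in> sets borel"
  unfolding window_def by simp

lemma bounded_window: "bounded (window m)"
  unfolding window_def by simp

lemma measurable_infdist [measurable]:
  "f \<in> borel_measurable M \<Longrightarrow> (\<lambda>x. infdist (f x) (F :: 'd::euclidean_space set)) \<in> borel_measurable M"
  by (rule borel_measurable_continuous_on[where f = "\<lambda>x. infdist x F"])
    (auto intro: continuous_on_infdist continuous_on_id)

lemma path_tuples_sets: "path_tuples m k r \<in> sets (tuple_space (Suc k))"
proof -
  have "Measurable.pred (tuple_space (Suc k)) (\<lambda>x. x i \<in> (window m :: 'd::euclidean_space set))"
    if "i < Suc k" for i
    using that by measurable
  then have "{x \<in> space (tuple_space (Suc k)). (\<forall>i\<in>{..<Suc k}. x i \<in> (window m :: 'd::euclidean_space set))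
      \<and> infdist (x k) (frontier (window m)) \<le> r} \<in> sets (tuple_space (Suc k))"
    by measurable
  from sets.Int[OF chain_tuples_sets this] show ?thesis
    unfolding path_tuples_def chain_tuples_def by (simp add: Int_def conj_commute conj_left_commute)
qed

lemma path_tuples_subset_window: "path_tuples m k r \<subseteq> PiE {..<Suc k} (\<lambda>_. window m)"
  unfolding path_tuples_def chain_tuples_def space_tuple_space by (auto simp: PiE_iff extensional_def)

lemma path_count_eq: "path_count m (Suc k) S r = ecount (distinct_tuples (Suc k) S \<inter> path_tuples m k r)"
proof -
  have "{x \<in> distinct_tuples (Suc k) (S \<inter> window m).
      norm (x 0) \<le> r \<and> infdist (x (Suc k - 1)) (frontier (window m)) \<le> r \<and>
      (\<forall>i. Suc i < Suc k \<longrightarrow> dist (x (Suc i)) (x i) \<le> r)} = distinct_tuples (Suc k) S \<inter> path_tuples m k r"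
    unfolding distinct_tuples_def path_tuples_def chain_tuples_def space_tuple_space
    by (auto simp: PiE_iff)
  then show ?thesis unfolding path_count_def by simp
qed

lemma expected_paths_eq_suminf:
  assumes "simple_point_process M \<Phi>"
  shows "expected_paths M \<Phi> m r = (\<Sum>k. factorial_moment_measure M \<Phi> (Suc k) (path_tuples m k r))"
  unfolding expected_paths_def factorial_moment_measure_def path_count_eq
  by (rule nn_integral_suminf, rule measurable_ecount_distinct_tuples[OF assms bounded_window
        window_sets path_tuples_sets path_tuples_subset_window])

theorem lower_crit_radius_mono:
  fixes \<Phi>1 :: "'a \<Rightarrow> 'd::euclidean_space set" and \<Phi>2 :: "'b \<Rightarrow> 'd set"
  assumes "simple_point_process M1 \<Phi>1" "simple_point_process M2 \<Phi>2"
    and le: "\<And>k C. k \<ge> 1 \<Longrightarrow> C \<in> sets (tuple_space k) \<Longrightarrow>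
      factorial_moment_measure M1 \<Phi>1 k C \<le> factorial_moment_measure M2 \<Phi>2 k C"
  shows "lower_crit_radius M2 \<Phi>2 \<le> lower_crit_radius M1 \<Phi>1"
proof -
  have "expected_paths M1 \<Phi>1 m r \<le> expected_paths M2 \<Phi>2 m r" for m r
    unfolding expected_paths_eq_suminf[OF assms(1)] expected_paths_eq_suminf[OF assms(2)]
    by (intro suminf_le summableI le path_tuples_sets) simp
  then have "liminf (\<lambda>m. expected_paths M1 \<Phi>1 m r) \<le> liminf (\<lambda>m. expected_paths M2 \<Phi>2 m r)" for r
    by (intro Liminf_mono) auto
  then have "{ereal r | r. r > 0 \<and> liminf (\<lambda>m. expected_paths M1 \<Phi>1 m r) > 0}
      \<subseteq> {ereal r | r. r > 0 \<and> liminf (\<lambda>m. expected_paths M2 \<Phi>2 m r) > 0}"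
    using order_less_le_trans by blast
  then show ?thesis unfolding lower_crit_radius_def by (rule Inf_superset_mono)
qed


section \<open>Dyadic grids\<close>

definition mesh :: "real \<Rightarrow> nat \<Rightarrow> real" where
  "mesh s n = s / 2 ^ n"

definition grid_index :: "real \<Rightarrow> nat \<Rightarrow> 'd::euclidean_space \<Rightarrow> 'd" where
  "grid_index s n z = (\<Sum>b\<in>Basis. of_int \<lfloor>(z \<bullet> b) / mesh s n\<rfloor> *\<^sub>R b)"

definition grid_cell :: "real \<Rightarrow> nat \<Rightarrow> 'd \<Rightarrow> 'd::euclidean_space set" where
  "grid_cell s n a = {z. grid_index s n z = a}"

lemma mesh_pos: "s > 0 \<Longrightarrow> mesh s n > 0"
  unfolding mesh_def by simp

lemma mesh_le: "s > 0 \<Longrightarrow> mesh s n \<le> s"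
  unfolding mesh_def by (simp add: divide_le_eq)

lemma grid_index_inner: "b \<in> Basis \<Longrightarrow> grid_index s n z \<bullet> b = of_int \<lfloor>(z \<bullet> b) / mesh s n\<rfloor>"
  unfolding grid_index_def by (simp add: inner_sum_left inner_Basis if_distrib cong: if_cong)

lemma grid_index_eq_iff:
  "grid_index s n z = grid_index s n z' \<longleftrightarrow>
     (\<forall>b\<in>Basis. \<lfloor>(z \<bullet> b) / mesh s n\<rfloor> = \<lfloor>(z' \<bullet> b) / mesh s n\<rfloor>)"
  by (simp add: euclidean_eq_iff[of "grid_index s n z"] grid_index_inner)

lemma grid_index_coarsen:
  assumes "m \<le> n" "grid_index s n z = grid_index s n z'"
  shows "grid_index s m z = grid_index s m z'"
proof -
  have "\<lfloor>t / mesh s m\<rfloor> = \<lfloor>t / mesh s n\<rfloor> div 2 ^ (n - m)" for t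
  proof -
    have "t / mesh s m = (t / mesh s n) / 2 ^ (n - m)"
      using assms(1) by (simp add: mesh_def power_diff)
    also have "\<dots> = (t / mesh s n) / real_of_int (2 ^ (n - m))"
      by simp
    finally show ?thesis by (simp only: floor_divide_real_eq_div[of "2 ^ (n - m)"] zero_le_power)
  qed
  then show ?thesis using assms(2) unfolding grid_index_eq_iff by simp
qed

lemma abs_diff_less_of_floor_eq:
  fixes a b h :: real
  assumes "\<lfloor>a / h\<rfloor> = \<lfloor>b / h\<rfloor>" "h > 0"
  shows "\<bar>a - b\<bar> < h"
proof -
  have "\<bar>a / h - b / h\<bar> < 1"
    using assms(1) of_int_floor_le[of "a / h"] of_int_floor_le[of "b / h"]
      real_of_int_floor_add_one_gt[of "a / h"] real_of_int_floor_add_one_gt[of "b / h"]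
    by linarith
  then have "\<bar>a - b\<bar> / h < 1"
    using assms(2) by (simp add: diff_divide_distrib[symmetric])
  then show ?thesis using assms(2) by simp
qed

lemma norm_diff_le_of_grid_index_eq:
  assumes "s > 0" "grid_index s n z = grid_index s n (z' :: 'd::euclidean_space)"
  shows "norm (z - z') \<le> DIM('d) * mesh s n"
proof -
  have "norm (z - z') \<le> (\<Sum>b\<in>Basis. \<bar>(z - z') \<bullet> b\<bar>)" by (rule norm_le_l1)
  also have "\<dots> \<le> (\<Sum>b\<in>(Basis :: 'd set). mesh s n)"
  proof (rule sum_mono)
    fix b :: 'd assume "b \<in> Basis"
    then have "\<bar>z \<bullet> b - z' \<bullet> b\<bar> < mesh s n"
      using assms by (intro abs_diff_less_of_floor_eq mesh_pos) (auto simp: grid_index_eq_iff)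
    then show "\<bar>(z - z') \<bullet> b\<bar> \<le> mesh s n" by (simp add: inner_diff_left)
  qed
  finally show ?thesis by simp
qed

lemma eventually_grid_index_neq:
  assumes s: "s > 0" and "z \<noteq> (z' :: 'd::euclidean_space)"
  shows "eventually (\<lambda>n. grid_index s n z \<noteq> grid_index s n z') sequentially"
proof -
  obtain b where b: "b \<in> Basis" "z \<bullet> b \<noteq> z' \<bullet> b" using assms(2) euclidean_eq_iff by blast
  define \<delta> where "\<delta> = \<bar>z \<bullet> b - z' \<bullet> b\<bar>"
  have "\<delta> > 0" using b unfolding \<delta>_def by simp
  obtain N :: nat where "s / \<delta> < N" using reals_Archimedean2 by blast
  also have "N < (2::real) ^ N" by (rule of_nat_less_two_power)
  finally have "s < 2 ^ N * \<delta>" using \<open>\<delta> > 0\<close> by (simp add: divide_less_eq)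
  then have "mesh s N < \<delta>" unfolding mesh_def by (simp add: divide_less_eq mult.commute)
  then have N: "grid_index s N z \<noteq> grid_index s N z'"
    using abs_diff_less_of_floor_eq[OF _ mesh_pos[OF s]] b
    unfolding \<delta>_def grid_index_eq_iff by fastforce
  show ?thesis
  proof (rule eventually_sequentiallyI)
    show "grid_index s n z \<noteq> grid_index s n z'" if "N \<le> n" for n
      using grid_index_coarsen[OF that] N by blast
  qed
qed

lemma grid_index_measurable [measurable]: "grid_index s n \<in> borel_measurable borel"
proof -
  have [measurable]: "(\<lambda>x. real_of_int \<lfloor>x\<rfloor>) \<in> borel_measurable (borel :: real measure)"
    by (rule borel_measurable_real_floor)
  show ?thesis unfolding grid_index_def by measurable
qed

lemma grid_cell_sets: "grid_cell s n (a :: 'd::euclidean_space) \<in> sets borel"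
proof -
  have "Measurable.pred borel (\<lambda>z. grid_index s n z = (a :: 'd))" by measurable
  then show ?thesis unfolding grid_cell_def pred_def by simp
qed

lemma bounded_grid_cell:
  assumes "s > 0" shows "bounded (grid_cell s n (a :: 'd::euclidean_space))"
proof (cases "grid_cell s n a = {}")
  case False
  then obtain z0 where z0: "grid_index s n z0 = a" unfolding grid_cell_def by auto
  have "grid_cell s n a \<subseteq> cball z0 (DIM('d) * mesh s n)"
    using norm_diff_le_of_grid_index_eq[OF assms, of n z0] z0 unfolding grid_cell_def
    by (auto simp: dist_norm)
  then show ?thesis using bounded_cball bounded_subset by blast
qed simp

lemma floor_in_range: "\<bar>t :: real\<bar> \<le> C \<Longrightarrow> \<lfloor>t\<rfloor> \<in> {-\<lceil>C\<rceil>..\<lceil>C\<rceil>}"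
  using floor_mono[of "- C" t] floor_mono[of t C] le_of_int_ceiling[of C]
  by (auto simp: floor_minus) linarith

lemma finite_grid_index_image:
  assumes s: "s > 0" and W: "bounded W"
  shows "finite (grid_index s n ` (W :: 'd::euclidean_space set))"
proof -
  obtain B where B: "\<forall>z\<in>W. norm z \<le> B" using W bounded_iff by blast
  define K where "K = \<lceil>B / mesh s n\<rceil>"
  let ?vec = "\<lambda>a. \<Sum>b\<in>Basis. of_int (a b) *\<^sub>R b :: 'd"
  have "grid_index s n ` W \<subseteq> ?vec ` PiE Basis (\<lambda>_. {-K..K})"
  proof
    fix y assume "y \<in> grid_index s n ` W"
    then obtain z where z: "z \<in> W" "y = grid_index s n z" by auto
    have "\<lfloor>(z \<bullet> b) / mesh s n\<rfloor> \<in> {-K..K}" if b: "b \<in> Basis" for b :: 'd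
    proof -
      have "\<bar>z \<bullet> b\<bar> \<le> B" using Basis_le_norm[OF b, of z] B z(1) by auto
      then have "\<bar>(z \<bullet> b) / mesh s n\<bar> \<le> B / mesh s n"
        using mesh_pos[OF s, of n] by (simp add: divide_right_mono)
      then show ?thesis unfolding K_def by (rule floor_in_range)
    qed
    then have "restrict (\<lambda>b. \<lfloor>(z \<bullet> b) / mesh s n\<rfloor>) Basis \<in> PiE Basis (\<lambda>_. {-K..K})"
      by (simp add: restrict_PiE_iff)
    moreover have "y = ?vec (restrict (\<lambda>b. \<lfloor>(z \<bullet> b) / mesh s n\<rfloor>) Basis)"
      unfolding z(2) grid_index_def by (intro sum.cong refl) simp
    ultimately show "y \<in> ?vec ` PiE Basis (\<lambda>_. {-K..K})" by blast
  qed
  then show ?thesis by (rule finite_subset) (auto intro!: finite_PiE)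
qed


section \<open>Separating tuples by dyadic cells\<close>

definition grid_separated :: "real \<Rightarrow> nat \<Rightarrow> nat \<Rightarrow> (nat \<Rightarrow> 'd::euclidean_space) \<Rightarrow> bool" where
  "grid_separated s k n x \<longleftrightarrow>
     (\<forall>i\<in>{..<k}. \<forall>j\<in>{..<k}. i \<noteq> j \<longrightarrow> grid_index s n (x i) \<noteq> grid_index s n (x j))"

definition separation_level :: "real \<Rightarrow> nat \<Rightarrow> nat \<Rightarrow> (nat \<Rightarrow> 'd::euclidean_space) set" where
  "separation_level s k n = {x \<in> space (tuple_space k).
     grid_separated s k n x \<and> (\<forall>m\<in>{..<n}. \<not> grid_separated s k m x)}"

definition separation_block :: "real \<Rightarrow> nat \<Rightarrow> nat \<Rightarrow> (nat \<Rightarrow> 'd) \<Rightarrow> (nat \<Rightarrow> 'd::euclidean_space) set" where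
  "separation_block s k n c = {x \<in> separation_level s k n. \<forall>i\<in>{..<k}. grid_index s n (x i) = c i}"

lemma separation_level_sets: "separation_level s k n \<in> sets (tuple_space k)"
proof -
  have "Measurable.pred (tuple_space k) (\<lambda>x. grid_index s m (x i) = grid_index s m (x j :: 'd::euclidean_space))"
    if "i < k" "j < k" for i j m
    using that by measurable
  then have "Measurable.pred (tuple_space k) (\<lambda>x. grid_separated s k m (x :: nat \<Rightarrow> 'd::euclidean_space))"
    for m
    unfolding grid_separated_def by measurable
  then show ?thesis unfolding separation_level_def by measurable
qed

lemma separation_block_sets: "separation_block s k n (c :: nat \<Rightarrow> 'd::euclidean_space) \<in> sets (tuple_space k)"
proof -
  have "Measurable.pred (tuple_space k) (\<lambda>x. grid_index s n (x i) = (c i :: 'd))" if "i < k" for i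
    using that by measurable
  then have "{x \<in> space (tuple_space k). \<forall>i\<in>{..<k}. grid_index s n (x i) = c i} \<in> sets (tuple_space k)"
    by measurable
  from sets.Int[OF separation_level_sets this] show ?thesis
    unfolding separation_block_def separation_level_def by (simp add: Int_def conj_commute conj_left_commute)
qed

lemma separation_levels_disjoint: "disjoint_family (separation_level s k)"
  unfolding disjoint_family_on_def separation_level_def by (auto simp: neq_iff)

lemma separation_blocks_disjoint: "disjoint_family_on (separation_block s k n) (PiE {..<k} X)"
proof (unfold disjoint_family_on_def, intro ballI impI)
  fix c c' assume "c \<in> PiE {..<k} X" "c' \<in> PiE {..<k} X" "c \<noteq> c'"
  then obtain i where "i < k" "c i \<noteq> c' i" using PiE_ext by (metis lessThan_iff)
  then show "separation_block s k n c \<inter> separation_block s k n c' = {}"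
    unfolding separation_block_def by auto
qed

lemma separation_level_cover:
  assumes s: "s > 0" and x: "x \<in> injective_tuples k"
  obtains n where "x \<in> separation_level s k n"
proof -
  have "eventually (\<lambda>n. grid_index s n (x i) \<noteq> grid_index s n (x j)) sequentially"
    if "i \<in> {..<k}" "j \<in> {..<k}" "i \<noteq> j" for i j
    using x that by (intro eventually_grid_index_neq[OF s]) (auto simp: injective_tuples_def)
  then have "eventually (\<lambda>n. grid_separated s k n x) sequentially"
    unfolding grid_separated_def by (intro eventually_ball_finite ballI) (auto intro: eventually_mono)
  then obtain N where "grid_separated s k N x" by (auto simp: eventually_sequentially)
  then have "grid_separated s k (LEAST n. grid_separated s k n x) x"
    "\<forall>m\<in>{..<LEAST n. grid_separated s k n x}. \<not> grid_separated s k m x"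
    by (auto intro: LeastI dest: not_less_Least)
  then show ?thesis using x that unfolding separation_level_def injective_tuples_def by blast
qed

text \<open>Membership in a level depends only on the cells of the points at that level and, by
  nesting, at all coarser levels.\<close>
lemma separation_block_eq_PiE:
  assumes x: "x \<in> separation_block s k n c"
  shows "separation_block s k n c = PiE {..<k} (\<lambda>i. grid_cell s n (c i))"
proof
  show "separation_block s k n c \<subseteq> PiE {..<k} (\<lambda>i. grid_cell s n (c i))"
    unfolding separation_block_def separation_level_def space_tuple_space grid_cell_def
    by (auto simp: PiE_iff extensional_def)
next
  show "PiE {..<k} (\<lambda>i. grid_cell s n (c i)) \<subseteq> separation_block s k n c"
  proof
    fix y assume y: "y \<in> PiE {..<k} (\<lambda>i. grid_cell s n (c i))"
    have "grid_index s n (y i) = grid_index s n (x i)" if "i < k" for i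
      using x y that unfolding separation_block_def grid_cell_def by (auto simp: PiE_iff)
    then have "grid_index s m (y i) = grid_index s m (x i)" if "i < k" "m \<le> n" for i m
      using that grid_index_coarsen by blast
    then have "grid_separated s k m y = grid_separated s k m x" if "m \<le> n" for m
      using that unfolding grid_separated_def by auto
    then show "y \<in> separation_block s k n c" using x y
      unfolding separation_block_def separation_level_def grid_cell_def space_tuple_space
      by (auto simp: PiE_iff)
  qed
qed

lemma separation_block_subset_cells:
  "separation_block s k n c \<subseteq> PiE {..<k} (\<lambda>_. \<Union>i<k. grid_cell s n (c i))"
  unfolding separation_block_def separation_level_def space_tuple_space grid_cell_def
  by (auto simp: PiE_iff extensional_def)

lemma factorial_moment_separation_block_le:
  fixes \<Phi> :: "'a \<Rightarrow> 'd::euclidean_space set"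
  assumes wsp: "weakly_sub_poisson M \<Phi>"
    and mean: "\<forall>B\<in>sets borel. mean_measure M \<Phi> B = emeasure lborel B" and s: "s > 0"
  shows "factorial_moment_measure M \<Phi> k (separation_block s k n c)
    \<le> emeasure (PiM {..<k} (\<lambda>_. lborel)) (separation_block s k n c)"
proof (cases "separation_block s k n c = {}")
  case False
  then obtain x where x: "x \<in> separation_block s k n c" by auto
  interpret product_sigma_finite "\<lambda>_::nat. lborel :: 'd measure" by standard
  define B where "B i = grid_cell s n (c i)" for i
  have block: "separation_block s k n c = PiE {..<k} B"
    unfolding B_def by (rule separation_block_eq_PiE[OF x])
  have B: "\<forall>i<k. B i \<in> sets borel \<and> bounded (B i)"
    unfolding B_def using grid_cell_sets bounded_grid_cell[OF s] by auto
  have "disjoint_family_on B {..<k}"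
    using x unfolding disjoint_family_on_def B_def grid_cell_def separation_block_def
      separation_level_def grid_separated_def by auto
  then have "factorial_moment_measure M \<Phi> k (PiE {..<k} B) \<le> (\<Prod>i<k. mean_measure M \<Phi> (B i))"
    using wsp B unfolding weakly_sub_poisson_def by blast
  also have "\<dots> = (\<Prod>i<k. emeasure lborel (B i))" using mean B by (intro prod.cong) auto
  also have "\<dots> = emeasure (PiM {..<k} (\<lambda>_. lborel)) (PiE {..<k} B)"
    using B by (subst emeasure_PiM) auto
  finally show ?thesis unfolding block .
qed simp

definition meeting_blocks ::
  "real \<Rightarrow> nat \<Rightarrow> nat \<Rightarrow> 'd set \<Rightarrow> (nat \<Rightarrow> 'd) set \<Rightarrow> (nat \<Rightarrow> 'd::euclidean_space) set" where
  "meeting_blocks s k n W C =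
     {c \<in> PiE {..<k} (\<lambda>_. grid_index s n ` W). separation_block s k n c \<inter> C \<noteq> {}}"

lemma finite_meeting_blocks:
  "s > 0 \<Longrightarrow> bounded W \<Longrightarrow> finite (meeting_blocks s k n W C)"
  unfolding meeting_blocks_def
  by (rule finite_subset[of _ "PiE {..<k} (\<lambda>_. grid_index s n ` W)"])
    (auto intro!: finite_PiE finite_grid_index_image)

lemma injective_tuples_subset_meeting_blocks:
  assumes s: "s > 0" and C: "C \<subseteq> PiE {..<k} (\<lambda>_. W)"
  shows "injective_tuples k \<inter> C \<subseteq> (\<Union>n. \<Union>c\<in>meeting_blocks s k n W C. separation_block s k n c)"
proof
  fix x assume x: "x \<in> injective_tuples k \<inter> C"
  then obtain n where n: "x \<in> separation_level s k n" using separation_level_cover[OF s] by blast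
  define c where "c = restrict (\<lambda>i. grid_index s n (x i)) {..<k}"
  have "x \<in> separation_block s k n c" using n unfolding separation_block_def c_def by auto
  moreover have "c \<in> PiE {..<k} (\<lambda>_. grid_index s n ` W)"
    using x C unfolding c_def by (auto simp: restrict_PiE_iff PiE_iff)
  ultimately show "x \<in> (\<Union>n. \<Union>c\<in>meeting_blocks s k n W C. separation_block s k n c)"
    using x unfolding meeting_blocks_def by blast
qed

lemma factorial_moment_measure_le_sum_blocks:
  fixes \<Phi> :: "'a \<Rightarrow> 'd::euclidean_space set"
  assumes spp: "simple_point_process M \<Phi>" and s: "s > 0"
    and C: "C \<subseteq> PiE {..<k} (\<lambda>_. W)" and W: "bounded W"
  shows "factorial_moment_measure M \<Phi> k C
    \<le> (\<Sum>n. \<Sum>c\<in>meeting_blocks s k n W C. factorial_moment_measure M \<Phi> k (separation_block s k n c))"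
proof -
  let ?G = "\<lambda>n. meeting_blocks s k n W C"
  let ?f = "\<lambda>n c \<omega>. ecount (distinct_tuples k (\<Phi> \<omega>) \<inter> separation_block s k n c)"
  have f_meas: "?f n c \<in> borel_measurable M" for n c
    using bounded_grid_cell[OF s]
    by (intro measurable_ecount_distinct_tuples[OF spp _ _ separation_block_sets
          separation_block_subset_cells]) (auto intro: grid_cell_sets)
  have "ecount (distinct_tuples k (\<Phi> \<omega>) \<inter> C) \<le> (\<Sum>n. \<Sum>c\<in>?G n. ?f n c \<omega>)" for \<omega>
  proof -
    have "distinct_tuples k (\<Phi> \<omega>) \<inter> C \<subseteq> (\<Union>n. \<Union>c\<in>?G n. distinct_tuples k (\<Phi> \<omega>) \<inter> separation_block s k n c)"
      using injective_tuples_subset_meeting_blocks[OF s C] by (auto simp: distinct_tuples_eq)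
    then have "ecount (distinct_tuples k (\<Phi> \<omega>) \<inter> C)
        \<le> ecount (\<Union>n. \<Union>c\<in>?G n. distinct_tuples k (\<Phi> \<omega>) \<inter> separation_block s k n c)"
      by (rule ecount_mono)
    also have "\<dots> \<le> (\<Sum>n. ecount (\<Union>c\<in>?G n. distinct_tuples k (\<Phi> \<omega>) \<inter> separation_block s k n c))"
      unfolding ecount_eq_emeasure by (rule emeasure_subadditive_countably) auto
    also have "\<dots> \<le> (\<Sum>n. \<Sum>c\<in>?G n. ?f n c \<omega>)"
      unfolding ecount_eq_emeasure using finite_meeting_blocks[OF s W]
      by (intro suminf_le summableI emeasure_subadditive_finite) auto
    finally show ?thesis .
  qed
  then have "factorial_moment_measure M \<Phi> k C \<le> (\<integral>\<^sup>+\<omega>. (\<Sum>n. \<Sum>c\<in>?G n. ?f n c \<omega>) \<partial>M)"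
    unfolding factorial_moment_measure_def by (intro nn_integral_mono)
  also have "\<dots> = (\<Sum>n. \<Sum>c\<in>?G n. \<integral>\<^sup>+\<omega>. ?f n c \<omega> \<partial>M)"
    using f_meas by (simp add: nn_integral_suminf nn_integral_sum borel_measurable_sum)
  finally show ?thesis unfolding factorial_moment_measure_def .
qed

lemma emeasure_meeting_blocks:
  assumes s: "s > 0" and W: "bounded W"
  shows "(\<Sum>n. \<Sum>c\<in>meeting_blocks s k n W C. emeasure (PiM {..<k} (\<lambda>_. lborel)) (separation_block s k n c))
    = emeasure (PiM {..<k} (\<lambda>_. lborel))
        (\<Union>n. \<Union>c\<in>meeting_blocks s k n W C. separation_block s k n (c :: nat \<Rightarrow> 'd::euclidean_space))"
proof -
  let ?L = "PiM {..<k} (\<lambda>_. lborel :: 'd measure)"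
  let ?G = "\<lambda>n. meeting_blocks s k n W C"
  have blocks: "separation_block s k n c \<in> sets ?L" for n c
    unfolding sets_PiM_lborel by (rule separation_block_sets)
  have "(\<Sum>c\<in>?G n. emeasure ?L (separation_block s k n c))
      = emeasure ?L (\<Union>c\<in>?G n. separation_block s k n c)" for n
  proof (rule sum_emeasure)
    show "disjoint_family_on (separation_block s k n) (?G n)"
      by (rule disjoint_family_on_mono[OF _ separation_blocks_disjoint])
        (auto simp: meeting_blocks_def)
  qed (use finite_meeting_blocks[OF s W] blocks in auto)
  moreover have "disjoint_family (\<lambda>n. \<Union>c\<in>?G n. separation_block s k n c)"
    using separation_levels_disjoint[of s k]
    unfolding disjoint_family_on_def separation_block_def by blast
  then have "(\<Sum>n. emeasure ?L (\<Union>c\<in>?G n. separation_block s k n c))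
      = emeasure ?L (\<Union>n. \<Union>c\<in>?G n. separation_block s k n c)"
    using finite_meeting_blocks[OF s W] blocks by (intro suminf_emeasure) auto
  ultimately show ?thesis by simp
qed

text \<open>Cover the injective tuples of C by products of dyadic cells just fine enough to separate
  their points; the sub-Poisson inequality applies to each such product of disjoint cells, and all
  of them lie in the enlargement E.\<close>
lemma factorial_moment_measure_le_enlargement:
  fixes \<Phi> :: "'a \<Rightarrow> 'd::euclidean_space set"
  assumes spp: "simple_point_process M \<Phi>" and wsp: "weakly_sub_poisson M \<Phi>"
    and mean: "\<forall>B\<in>sets borel. mean_measure M \<Phi> B = emeasure lborel B"
    and C: "C \<subseteq> PiE {..<k} (\<lambda>_. W)" and W: "bounded W"
    and \<delta>: "\<delta> > 0" and E: "E \<in> sets (tuple_space k)"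
    and enlarged: "\<And>x y. x \<in> C \<Longrightarrow> y \<in> space (tuple_space k) \<Longrightarrow>
      (\<forall>i<k. norm (y i - x i) \<le> \<delta>) \<Longrightarrow> y \<in> E"
  shows "factorial_moment_measure M \<Phi> k C \<le> emeasure (PiM {..<k} (\<lambda>_. lborel)) E"
proof -
  define s where "s = \<delta> / DIM('d)"
  have s: "s > 0" and s_mesh: "DIM('d) * mesh s n \<le> \<delta>" for n
    using \<delta> mesh_le[of s n] unfolding s_def by (auto simp: field_simps)
  let ?L = "PiM {..<k} (\<lambda>_. lborel :: 'd measure)"
  let ?G = "\<lambda>n. meeting_blocks s k n W C"
  have "factorial_moment_measure M \<Phi> k C
      \<le> (\<Sum>n. \<Sum>c\<in>?G n. factorial_moment_measure M \<Phi> k (separation_block s k n c))"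
    by (rule factorial_moment_measure_le_sum_blocks[OF spp s C W])
  also have "\<dots> \<le> (\<Sum>n. \<Sum>c\<in>?G n. emeasure ?L (separation_block s k n c))"
    by (intro suminf_le summableI sum_mono factorial_moment_separation_block_le[OF wsp mean s])
  also have "\<dots> = emeasure ?L (\<Union>n. \<Union>c\<in>?G n. separation_block s k n c)"
    by (rule emeasure_meeting_blocks[OF s W])
  also have "\<dots> \<le> emeasure ?L E"
  proof (rule emeasure_mono)
    show "(\<Union>n. \<Union>c\<in>?G n. separation_block s k n c) \<subseteq> E"
    proof safe
      fix n c y assume c: "c \<in> ?G n" and y: "y \<in> separation_block s k n c"
      from c obtain x where x: "x \<in> separation_block s k n c" "x \<in> C"
        unfolding meeting_blocks_def by auto
      have "norm (y i - x i) \<le> \<delta>" if "i < k" for i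
      proof -
        have "grid_index s n (y i) = grid_index s n (x i)"
          using x(1) y that unfolding separation_block_def by auto
        then show ?thesis using norm_diff_le_of_grid_index_eq[OF s] s_mesh order_trans by blast
      qed
      moreover have "y \<in> space (tuple_space k)"
        using y unfolding separation_block_def separation_level_def by auto
      ultimately show "y \<in> E" using enlarged[OF x(2)] by blast
    qed
  qed (use E sets_PiM_lborel in auto)
  finally show ?thesis .
qed


section \<open>The sub-Poisson bound\<close>

lemma chain_tuples_0: "chain_tuples \<rho> 0 = PiE {..<Suc 0} (\<lambda>_. cball (0::'d::euclidean_space) \<rho>)"
  unfolding chain_tuples_def space_tuple_space
  by (simp add: PiE_iff lessThan_Suc set_eq_iff conj_commute conj_left_commute)

lemma chain_tuples_Suc:
  assumes x: "x \<in> PiE {..<Suc k} (\<lambda>_. UNIV)"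
  shows "x(Suc k := y) \<in> chain_tuples \<rho> (Suc k) \<longleftrightarrow>
    x \<in> chain_tuples \<rho> k \<and> y \<in> cball (x k :: 'd::euclidean_space) \<rho>"
proof -
  have "x(Suc k := y) \<in> PiE {..<Suc (Suc k)} (\<lambda>_. UNIV)"
    using x by (auto simp: PiE_iff extensional_def)
  moreover have "(\<forall>i\<in>{..<Suc k}. dist ((x(Suc k := y)) (Suc i)) ((x(Suc k := y)) i) \<le> \<rho>)
      \<longleftrightarrow> (\<forall>i\<in>{..<k}. dist (x (Suc i)) (x i) \<le> \<rho>) \<and> dist y (x k) \<le> \<rho>"
    by (auto simp: less_Suc_eq)
  ultimately show ?thesis
    using x unfolding chain_tuples_def space_tuple_space by (auto simp: dist_commute)
qed

text \<open>Integrating out the last point of a chain contributes one ball volume per step.\<close>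
lemma emeasure_chain_tuples:
  assumes \<rho>: "\<rho> \<ge> 0"
  shows "emeasure (PiM {..<Suc k} (\<lambda>_. lborel)) (chain_tuples \<rho> k :: (nat \<Rightarrow> 'd::euclidean_space) set)
     = ennreal (unit_ball_vol DIM('d) * \<rho> ^ DIM('d)) ^ Suc k"
proof (induction k)
  interpret product_sigma_finite "\<lambda>_::nat. lborel :: 'd measure" by standard
  case 0
  show ?case unfolding chain_tuples_0 by (subst emeasure_PiM) (auto simp: emeasure_cball[OF \<rho>])
next
  interpret product_sigma_finite "\<lambda>_::nat. lborel :: 'd measure" by standard
  case (Suc k)
  let ?c = "ennreal (unit_ball_vol DIM('d) * \<rho> ^ DIM('d))"
  let ?L = "\<lambda>I. PiM I (\<lambda>_. lborel :: 'd measure)"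
  have ins: "{..<Suc (Suc k)} = insert (Suc k) {..<Suc k}" by auto
  have sets: "chain_tuples \<rho> k \<in> sets (?L {..<Suc k})" "chain_tuples \<rho> (Suc k) \<in> sets (?L (insert (Suc k) {..<Suc k}))"
    unfolding ins[symmetric] sets_PiM_lborel by (rule chain_tuples_sets)+
  have "emeasure (?L {..<Suc (Suc k)}) (chain_tuples \<rho> (Suc k))
      = (\<integral>\<^sup>+ x. indicator (chain_tuples \<rho> (Suc k)) x \<partial>?L (insert (Suc k) {..<Suc k}))"
    using sets(2) unfolding ins by simp
  also have "\<dots> = (\<integral>\<^sup>+ x. (\<integral>\<^sup>+ y. indicator (chain_tuples \<rho> (Suc k)) (x(Suc k := y)) \<partial>lborel) \<partial>?L {..<Suc k})"
    using sets(2) by (intro product_nn_integral_insert) auto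
  also have "\<dots> = (\<integral>\<^sup>+ x. ?c * indicator (chain_tuples \<rho> k) x \<partial>?L {..<Suc k})"
  proof (rule nn_integral_cong)
    fix x assume "x \<in> space (?L {..<Suc k})"
    then have x: "x \<in> PiE {..<Suc k} (\<lambda>_. UNIV)" by (simp add: space_PiM)
    have "(\<integral>\<^sup>+ y. indicator (chain_tuples \<rho> (Suc k)) (x(Suc k := y)) \<partial>lborel)
        = (\<integral>\<^sup>+ y. indicator (chain_tuples \<rho> k) x * indicator (cball (x k) \<rho>) y \<partial>lborel)"
      using chain_tuples_Suc[OF x] by (intro nn_integral_cong) (simp add: indicator_def)
    also have "\<dots> = ?c * indicator (chain_tuples \<rho> k) x"
      by (simp add: nn_integral_cmult_indicator emeasure_cball[OF \<rho>] mult.commute)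
    finally show "(\<integral>\<^sup>+ y. indicator (chain_tuples \<rho> (Suc k)) (x(Suc k := y)) \<partial>lborel)
        = ?c * indicator (chain_tuples \<rho> k) x" .
  qed
  also have "\<dots> = ?c * ?c ^ Suc k"
    using sets(1) Suc.IH by (simp add: nn_integral_cmult_indicator)
  finally show ?case by simp
qed

lemma norm_ge_of_mem_frontier_window:
  assumes "z \<in> frontier (window m :: 'd::euclidean_space set)"
  shows "real m \<le> norm z"
proof -
  have "z \<in> window m" "z \<notin> box (- (real m *\<^sub>R One)) (real m *\<^sub>R (One :: 'd))"
    using assms unfolding window_def frontier_def by auto
  then obtain b :: 'd where b: "b \<in> Basis" "real m \<le> \<bar>z \<bullet> b\<bar>"
    unfolding window_def mem_box by force
  then show ?thesis using Basis_le_norm order_trans by blast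
qed

lemma chain_tuples_norm_le:
  assumes "x \<in> chain_tuples r k" "i \<le> k"
  shows "norm (x i :: 'd::euclidean_space) \<le> (real i + 1) * r"
  using assms(2)
proof (induction i)
  case 0
  then show ?case using assms(1) unfolding chain_tuples_def by simp
next
  case (Suc i)
  then have "dist (x (Suc i)) (x i) \<le> r" using assms(1) unfolding chain_tuples_def by simp
  then have "norm (x (Suc i)) \<le> norm (x i) + r"
    using norm_triangle_ineq2[of "x (Suc i)" "x i"] by (simp add: dist_norm)
  with Suc show ?case by (simp add: algebra_simps)
qed

lemma path_tuples_empty:
  assumes "(real k + 2) * r < real m"
  shows "path_tuples m k r = ({} :: (nat \<Rightarrow> 'd::euclidean_space) set)"
proof (rule ccontr)
  assume "path_tuples m k r \<noteq> ({} :: (nat \<Rightarrow> 'd) set)"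
  then obtain x :: "nat \<Rightarrow> 'd" where x: "x \<in> path_tuples m k r" by auto
  have "(0::'d) \<in> window m" unfolding window_def by (auto simp: mem_box)
  moreover have "window m \<noteq> (UNIV :: 'd set)" using bounded_window not_bounded_UNIV by metis
  ultimately have "frontier (window m :: 'd set) \<noteq> {}" by (intro frontier_not_empty) auto
  then obtain z where z: "z \<in> frontier (window m)" "infdist (x k) (frontier (window m)) = dist (x k) z"
    using infdist_attains_inf[of "frontier (window m)"] by auto
  have "real m \<le> norm z" by (rule norm_ge_of_mem_frontier_window[OF z(1)])
  also have "\<dots> \<le> norm (x k) + dist (x k) z"
    using norm_triangle_ineq2[of z "x k"] by (simp add: dist_norm norm_minus_commute)
  also have "\<dots> \<le> (real k + 1) * r + r"
    using x z(2) chain_tuples_norm_le[of x r k k] unfolding path_tuples_def by auto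
  finally show False using assms by (simp add: algebra_simps)
qed

text \<open>Moving every point of an r-path by at most (\<rho> - r) / 2 leaves a \<rho>-chain.\<close>
lemma factorial_moment_path_tuples_le:
  fixes \<Phi> :: "'a \<Rightarrow> 'd::euclidean_space set"
  assumes spp: "simple_point_process M \<Phi>" and wsp: "weakly_sub_poisson M \<Phi>"
    and mean: "\<forall>B\<in>sets borel. mean_measure M \<Phi> B = emeasure lborel B"
    and r: "0 < r" "r < \<rho>"
  shows "factorial_moment_measure M \<Phi> (Suc k) (path_tuples m k r)
    \<le> ennreal (unit_ball_vol DIM('d) * \<rho> ^ DIM('d)) ^ Suc k"
proof -
  define \<delta> where "\<delta> = (\<rho> - r) / 2"
  have "factorial_moment_measure M \<Phi> (Suc k) (path_tuples m k r)
      \<le> emeasure (PiM {..<Suc k} (\<lambda>_. lborel)) (chain_tuples \<rho> k :: (nat \<Rightarrow> 'd) set)"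
  proof (rule factorial_moment_measure_le_enlargement[OF spp wsp mean path_tuples_subset_window
        bounded_window _ chain_tuples_sets])
    show "\<delta> > 0" using r unfolding \<delta>_def by simp
    fix x y :: "nat \<Rightarrow> 'd"
    assume x: "x \<in> path_tuples m k r" and y: "y \<in> space (tuple_space (Suc k))"
      and "\<forall>i<Suc k. norm (y i - x i) \<le> \<delta>"
    then have close: "dist (y i) (x i) \<le> \<delta>" "dist (x i) (y i) \<le> \<delta>" if "i < Suc k" for i
      using that by (simp_all add: dist_norm norm_minus_commute)
    have x_chain: "norm (x 0) \<le> r" "\<forall>i\<in>{..<k}. dist (x (Suc i)) (x i) \<le> r"
      using x unfolding path_tuples_def chain_tuples_def by auto
    have "norm (y 0) \<le> norm (x 0) + dist (y 0) (x 0)"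
      using norm_triangle_sub[of "y 0" "x 0"] by (simp add: dist_norm)
    then have "norm (y 0) \<le> \<rho>"
      using x_chain(1) close(1)[of 0] r unfolding \<delta>_def by simp
    moreover have "dist (y (Suc i)) (y i) \<le> \<rho>" if "i < k" for i
    proof -
      have "dist (y (Suc i)) (y i) \<le> dist (y (Suc i)) (x (Suc i)) + dist (x (Suc i)) (x i) + dist (x i) (y i)"
        using dist_triangle[of "y (Suc i)" "y i" "x (Suc i)"] dist_triangle[of "x (Suc i)" "y i" "x i"]
        by simp
      moreover have "dist (x (Suc i)) (x i) \<le> r" using that x_chain(2) by simp
      ultimately show ?thesis
        using that close(1)[of "Suc i"] close(2)[of i] unfolding \<delta>_def by simp
    qed
    ultimately show "y \<in> chain_tuples \<rho> k" using y unfolding chain_tuples_def by blast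
  qed
  also have "\<dots> = ennreal (unit_ball_vol DIM('d) * \<rho> ^ DIM('d)) ^ Suc k"
    by (rule emeasure_chain_tuples) (use r in simp)
  finally show ?thesis .
qed

lemma exists_gt_mult_power_less_1:
  fixes c r :: real
  assumes "c > 0" "r \<ge> 0" "d > 0" "c * r ^ d < 1"
  obtains \<rho> where "r < \<rho>" "c * \<rho> ^ d < 1"
proof
  define q where "q = (c * r ^ d + 1) / 2"
  have q: "c * r ^ d < q" "q < 1" using assms(4) unfolding q_def by simp_all
  moreover have "0 \<le> c * r ^ d" using assms by simp
  ultimately have "q > 0" by linarith
  show "c * root d (q / c) ^ d < 1" using assms q \<open>q > 0\<close> by simp
  have "c * r ^ d < c * root d (q / c) ^ d" using assms q \<open>q > 0\<close> by simp
  then have "r ^ d < root d (q / c) ^ d" using assms(1) by simp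
  then show "r < root d (q / c)"
    by (rule power_less_imp_less_base) (use assms \<open>q > 0\<close> in \<open>simp add: real_root_ge_zero\<close>)
qed

text \<open>The k-th term is at most (p^2)^(k+1) and vanishes unless k + 2 \<ge> m / r.\<close>
lemma expected_paths_le_geometric:
  fixes \<Phi> :: "'a \<Rightarrow> 'd::euclidean_space set"
  assumes spp: "simple_point_process M \<Phi>" and wsp: "weakly_sub_poisson M \<Phi>"
    and mean: "\<forall>B\<in>sets borel. mean_measure M \<Phi> B = emeasure lborel B"
    and r: "0 < r" "r < \<rho>"
    and p: "0 < p" "p < 1" "unit_ball_vol DIM('d) * \<rho> ^ DIM('d) = p ^ 2"
  shows "expected_paths M \<Phi> m r \<le> ennreal (p ^ (nat \<lfloor>real m / r\<rfloor> - 1) * (\<Sum>k. p ^ Suc k))"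
proof -
  define N where "N = nat \<lfloor>real m / r\<rfloor> - 1"
  have term_le: "factorial_moment_measure M \<Phi> (Suc k) (path_tuples m k r) \<le> ennreal (p ^ N * p ^ Suc k)"
    for k
  proof (cases "(real k + 2) * r < real m")
    case False
    then have "real m / r \<le> real k + 2" using r by (simp add: divide_le_eq)
    then have "N \<le> Suc k" unfolding N_def by linarith
    have "factorial_moment_measure M \<Phi> (Suc k) (path_tuples m k r)
        \<le> ennreal (unit_ball_vol DIM('d) * \<rho> ^ DIM('d)) ^ Suc k"
      by (rule factorial_moment_path_tuples_le[OF spp wsp mean r])
    also have "\<dots> = ennreal ((p ^ 2) ^ Suc k)" unfolding p(3) by (rule ennreal_power) simp
    also have "(p ^ 2) ^ Suc k = p ^ Suc k * p ^ Suc k"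
      unfolding power2_eq_square power_mult_distrib ..
    also have "\<dots> \<le> ennreal (p ^ N * p ^ Suc k)"
      using p \<open>N \<le> Suc k\<close> by (intro ennreal_leI mult_right_mono power_decreasing) auto
    finally show ?thesis .
  qed (simp add: path_tuples_empty)
  have "expected_paths M \<Phi> m r \<le> (\<Sum>k. ennreal (p ^ N * p ^ Suc k))"
    unfolding expected_paths_eq_suminf[OF spp] by (intro suminf_le summableI term_le)
  also have "\<dots> = ennreal (p ^ N * (\<Sum>k. p ^ Suc k))"
    using p by (subst suminf_ennreal2) (auto intro: summable_mult simp: suminf_mult)
  finally show ?thesis unfolding N_def .
qed

lemma liminf_expected_paths_eq_0:
  fixes \<Phi> :: "'a \<Rightarrow> 'd::euclidean_space set"
  assumes spp: "simple_point_process M \<Phi>" and wsp: "weakly_sub_poisson M \<Phi>"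
    and mean: "\<forall>B\<in>sets borel. mean_measure M \<Phi> B = emeasure lborel B"
    and r: "r > 0" and small: "unit_ball_vol DIM('d) * r ^ DIM('d) < 1"
  shows "liminf (\<lambda>m. expected_paths M \<Phi> m r) = 0"
proof -
  obtain \<rho> where \<rho>: "r < \<rho>" "unit_ball_vol DIM('d) * \<rho> ^ DIM('d) < 1"
    using exists_gt_mult_power_less_1[OF _ _ _ small] r by auto
  define p where "p = sqrt (unit_ball_vol DIM('d) * \<rho> ^ DIM('d))"
  have p: "0 < p" "p < 1" "unit_ball_vol DIM('d) * \<rho> ^ DIM('d) = p ^ 2"
    using \<rho> r unfolding p_def by auto
  define N where "N m = nat \<lfloor>real m / r\<rfloor> - 1" for m :: nat
  define c where "c = (\<Sum>k. p ^ Suc k)"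
  have "liminf (\<lambda>m. expected_paths M \<Phi> m r) \<le> liminf (\<lambda>m. ennreal (p ^ N m * c))"
    unfolding N_def c_def
    by (intro Liminf_mono always_eventually allI expected_paths_le_geometric[OF spp wsp mean r \<rho>(1) p])
  also have "(\<lambda>m. ennreal (p ^ N m * c)) \<longlonglongrightarrow> 0"
  proof -
    have "filterlim N at_top sequentially"
    proof (subst filterlim_at_top, intro allI eventually_sequentiallyI)
      fix Z m :: nat assume "nat \<lceil>(real Z + 1) * r\<rceil> \<le> m"
      then have "real Z + 1 \<le> real m / r" using r by (simp add: le_divide_eq)
      then show "Z \<le> N m" unfolding N_def by linarith
    qed
    then have "(\<lambda>m. p ^ N m) \<longlonglongrightarrow> 0"
      using filterlim_compose[OF LIMSEQ_power_zero[of p]] p by (auto simp: o_def)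
    then have "(\<lambda>m. p ^ N m * c) \<longlonglongrightarrow> 0" by (rule tendsto_mult_left_zero)
    from tendsto_ennrealI[OF this] show ?thesis by simp
  qed
  then have "liminf (\<lambda>m. ennreal (p ^ N m * c)) = 0"
    by (rule lim_imp_Liminf[OF trivial_limit_sequentially])
  finally show ?thesis by simp
qed

theorem lower_crit_radius_sub_poisson_ge:
  fixes \<Phi> :: "'a \<Rightarrow> 'd::euclidean_space set"
  assumes spp: "simple_point_process M \<Phi>" and wsp: "weakly_sub_poisson M \<Phi>"
    and mean: "\<forall>B\<in>sets borel. mean_measure M \<Phi> B = emeasure lborel B"
  shows "1 \<le> ereal (measure lborel (ball (0::'d) 1)) * lower_crit_radius M \<Phi> ^ DIM('d)"
proof -
  define \<theta> where "\<theta> = unit_ball_vol DIM('d)"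
  have \<theta>: "\<theta> > 0" unfolding \<theta>_def by simp
  have vol: "measure lborel (ball (0::'d) 1) = \<theta>"
    unfolding \<theta>_def using content_ball[of 1 "0::'d"] by simp
  define \<rho>\<^sub>0 where "\<rho>\<^sub>0 = root DIM('d) (1 / \<theta>)"
  have \<rho>\<^sub>0: "\<rho>\<^sub>0 > 0" "\<theta> * \<rho>\<^sub>0 ^ DIM('d) = 1" unfolding \<rho>\<^sub>0_def using \<theta> by auto
  have "ereal \<rho>\<^sub>0 \<le> lower_crit_radius M \<Phi>"
    unfolding lower_crit_radius_def
  proof (rule Inf_greatest, safe)
    fix r :: real assume r: "r > 0" "liminf (\<lambda>m. expected_paths M \<Phi> m r) > 0"
    then have "\<theta> * \<rho>\<^sub>0 ^ DIM('d) \<le> \<theta> * r ^ DIM('d)"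
      using liminf_expected_paths_eq_0[OF spp wsp mean r(1)] \<rho>\<^sub>0(2) unfolding \<theta>_def
      by (metis less_irrefl not_le)
    then show "ereal \<rho>\<^sub>0 \<le> ereal r"
      using \<theta> r(1) \<rho>\<^sub>0(1) by simp
  qed
  then show ?thesis
  proof (cases "lower_crit_radius M \<Phi>")
    case (real t)
    with \<open>ereal \<rho>\<^sub>0 \<le> lower_crit_radius M \<Phi>\<close> \<rho>\<^sub>0(1) have "\<rho>\<^sub>0 ^ DIM('d) \<le> t ^ DIM('d)"
      by simp
    then have "1 \<le> \<theta> * t ^ DIM('d)" using \<rho>\<^sub>0(2) \<theta> by (metis mult_left_mono less_imp_le)
    then show ?thesis using real vol by simp
  qed (use vol \<theta> in simp_all)
qed

theorem proposition6p1:
  shows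
   "(\<forall>(M1::'a measure) (\<Phi>1::'a \<Rightarrow> 'd::euclidean_space set) (M2::'b measure) (\<Phi>2::'b \<Rightarrow> 'd set).
       simple_point_process M1 \<Phi>1 \<and> simple_point_process M2 \<Phi>2 \<and>
       sigma_finite_moments M1 \<Phi>1 \<and> sigma_finite_moments M2 \<Phi>2 \<and>
       (\<forall>k\<ge>1. \<forall>C\<in>sets (tuple_space k).
          factorial_moment_measure M1 \<Phi>1 k C \<le> factorial_moment_measure M2 \<Phi>2 k C)
       \<longrightarrow> lower_crit_radius M1 \<Phi>1 \<ge> lower_crit_radius M2 \<Phi>2)
    \<and>
    (\<forall>(M::'c measure) (\<Phi>::'c \<Rightarrow> 'd set).
       simple_point_process M \<Phi> \<and> stationary M \<Phi> \<and> weakly_sub_poisson M \<Phi> \<and>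
       (\<forall>B\<in>sets borel. mean_measure M \<Phi> B = emeasure lborel B)
       \<longrightarrow> ereal (measure lborel (ball (0::'d) 1)) * lower_crit_radius M \<Phi> ^ DIM('d) \<ge> 1)"
proof (intro conjI allI impI; elim conjE)
  fix M1 :: "'a measure" and \<Phi>1 :: "'a \<Rightarrow> 'd set" and M2 :: "'b measure" and \<Phi>2 :: "'b \<Rightarrow> 'd set"
  assume "simple_point_process M1 \<Phi>1" "simple_point_process M2 \<Phi>2"
    "\<forall>k\<ge>1. \<forall>C\<in>sets (tuple_space k). factorial_moment_measure M1 \<Phi>1 k C \<le> factorial_moment_measure M2 \<Phi>2 k C"
  then show "lower_crit_radius M2 \<Phi>2 \<le> lower_crit_radius M1 \<Phi>1"
    by (intro lower_crit_radius_mono) auto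
next
  fix M :: "'c measure" and \<Phi> :: "'c \<Rightarrow> 'd set"
  assume "simple_point_process M \<Phi>" "weakly_sub_poisson M \<Phi>"
    "\<forall>B\<in>sets borel. mean_measure M \<Phi> B = emeasure lborel B"
  then show "1 \<le> ereal (measure lborel (ball (0::'d) 1)) * lower_crit_radius M \<Phi> ^ DIM('d)"
    by (rule lower_crit_radius_sub_poisson_ge)
qed

end
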